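(* Let $(X_c,\Lambda_c)\in \mathbb{K}^{n \times p} \times \mathbb{K}^{p \times p}$ be an invariant pair of $Q(\lambda)=\lambda^2 M+\lambda D+K \in \mathbb{Q}_n(\star,\epsilon_1,\epsilon_2)$ with $\mathrm{rank}(X_c)=p \leq n$. Suppose $X_c=\begin{bmatrix}Q_1& Q_2\end{bmatrix} \begin{bmatrix}R\\ 0\end{bmatrix}$ where $R\in \mathbb{K}^{p\times p}$ is nonsingular and $Q=\begin{bmatrix}Q_1& Q_2\end{bmatrix} \in\mathbb{K}^{n\times n}$ satisfies $Q^{\star} Q=QQ^{\star}=I_n$. Let $\Lambda_a \in \mathbb{K}^{p \times p}$. Set $$\Delta M=Q \begin{bmatrix}-Q_1^{\star} M Q_1& \epsilon_1 M_{12}^\star \\ M_{12}& M_{22}\end{bmatrix}Q^{\star},\quad \Delta D=Q \begin{bmatrix}-Q_1^{\star} D Q_1& \epsilon_2 D_{12}^\star \\ D_{12}& D_{22}\end{bmatrix}Q^{\star},\quad \Delta K=Q \begin{bmatrix}-Q_1^{\star} K Q_1& \epsilon_1 K_{12}^\star \\ K_{12}& K_{22}\end{bmatrix}Q^{\star}$$ with $M_{12}=[Z_1-WS(\Lambda_a^2)^*]R^{-1}$, $D_{12}=[Z_2-WS \Lambda_a^*]R^{-1}$, $K_{12}=[Z_3-WS]R^{-1}$, where $M_{22}=\epsilon_1 M_{22}^\star$, $D_{22}=\epsilon_2 D_{22}^\star$, $K_{22}=\epsilon_1 K_{22}^\star$ are arbitrary matrices of order $(n-p) \times (n-p)$, $W=Q_2^{\star}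 MX_c(\Lambda_a^2-\Lambda_c^2)+Q_2^{\star} DX_c(\Lambda_a-\Lambda_c)+Z_1\Lambda_a^2+Z_2\Lambda_a+Z_3$, $S=((\Lambda_a^2)^*\Lambda_a^2+\Lambda_a^* \Lambda_a+I_p)^{-1}$, and $Z_1,Z_2,Z_3 \in \mathbb{K}^{(n-p) \times p}$ are arbitrary. Then $(X_c,\Lambda_a)$ is an invariant pair of $Q_\Delta (\lambda)=\lambda^2 (M+\Delta M)+\lambda (D+\Delta D)+ (K+\Delta K) \in \mathbb{Q}_n(\star,\epsilon_1,\epsilon_2)$.
   Context: $\mathbb{K}\in\{\mathbb{R},\mathbb{C}\}$, $\star\in\{*,T\}$ (conjugate transpose or transpose), $\epsilon_1,\epsilon_2\in\{1,-1\}$. $\mathbb{Q}_n(\star,\epsilon_1,\epsilon_2)$ is the set of quadratic matrix polynomials $\lambda^2M+\lambda D+K\in\mathbb{K}^{n\times n}[\lambda]$ with $M^\star=\epsilon_1M$, $D^\star=\epsilon_2D$, $K^\star=\epsilon_1K$. For $X\in\mathbb{K}^{n\times p}$, $\Lambda\in\mathbb{K}^{p\times p}$, $(X,\Lambda)$ is an invariant pair of $\lambda^2M+\lambda D+K$ if $MX\Lambda^2+DX\Lambda+KX=0$. *)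

theory Defs
  imports Complex_Main "Jordan_Normal_Form.DL_Rank"
begin

text \<open>Matrices over K are modelled as complex matrices; the case K = R is the case
  where all data matrices have real entries (predicate real_mat).\<close>

definition real_mat :: "complex mat \<Rightarrow> bool" where
  "real_mat A \<longleftrightarrow> (\<forall>i < dim_row A. \<forall>j < dim_col A. Im (A $$ (i, j)) = 0)"

definition ctrans :: "complex mat \<Rightarrow> complex mat" where
  "ctrans A = transpose_mat (map_mat cnj A)"

definition star_op :: "bool \<Rightarrow> complex mat \<Rightarrow> complex mat" where
  "star_op cs A = (if cs then ctrans A else transpose_mat A)"

definition minv :: "complex mat \<Rightarrow> complex mat" where
  "minv A = (THE B. B \<in> carrier_mat (dim_row A) (dim_row A) \<and>
                    A * B = 1\<^sub>m (dim_row A) \<and> B * A = 1\<^sub>m (dim_row A))"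

text \<open>Horizontal concatenation [A B].\<close>
definition append_cols :: "complex mat \<Rightarrow> complex mat \<Rightarrow> complex mat" where
  "append_cols A B = four_block_mat A B (0\<^sub>m 0 (dim_col A)) (0\<^sub>m 0 (dim_col B))"

definition in_Qn :: "nat \<Rightarrow> bool \<Rightarrow> complex \<Rightarrow> complex \<Rightarrow>
    complex mat \<Rightarrow> complex mat \<Rightarrow> complex mat \<Rightarrow> bool" where
  "in_Qn n cs e1 e2 M D K \<longleftrightarrow>
     M \<in> carrier_mat n n \<and> D \<in> carrier_mat n n \<and> K \<in> carrier_mat n n \<and>
     star_op cs M = e1 \<cdot>\<^sub>m M \<and> star_op cs D = e2 \<cdot>\<^sub>m D \<and> star_op cs K = e1 \<cdot>\<^sub>m K"

definition invariant_pair :: "complex mat \<Rightarrow> complex mat \<Rightarrow> complex mat \<Rightarrow>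
    complex mat \<Rightarrow> complex mat \<Rightarrow> bool" where
  "invariant_pair M D K X L \<longleftrightarrow>
     M * X * (L * L) + D * X * L + K * X = 0\<^sub>m (dim_row M) (dim_col L)"

end

theory Submission
  imports Defs
begin

(* As Q is unitary, (M + Delta M) X_c = Q2 (Q2^star M X_c + M12 R): the block
   -Q1^star M Q1 removes the Q1-component of M X_c, and likewise for D and K. The new residual is
   therefore Q2 times a combination of the blocks, which the invariance of (X_c, Lambda_c) turns into
   W - W S N with N = (Lambda_a^2)^* Lambda_a^2 + Lambda_a^* Lambda_a + I; and S N = I because N is
   positive definite. The structure is preserved because the middle block matrix is eps-symmetric
   under star and congruence by Q keeps it so. The rank hypothesis (implied by X_c = Q [R; 0]) and
   the real case need no separate argument. *)

lemma semiring_hom_cnj: "semiring_hom cnj"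
  by unfold_locales auto

lemma dim_row_star_op [simp]: "dim_row (star_op cs A) = dim_col A"
  and dim_col_star_op [simp]: "dim_col (star_op cs A) = dim_row A"
  by (auto simp: star_op_def ctrans_def)

lemma star_op_carrier_mat [simp]: "A \<in> carrier_mat a b \<Longrightarrow> star_op cs A \<in> carrier_mat b a"
  by (metis carrier_matD carrier_matI dim_col_star_op dim_row_star_op)

lemma ctrans_carrier_mat [simp]: "A \<in> carrier_mat a b \<Longrightarrow> ctrans A \<in> carrier_mat b a"
  using star_op_carrier_mat[of A a b True] by (simp add: star_op_def)

lemma index_star_op [simp]:
  "i < dim_col A \<Longrightarrow> j < dim_row A \<Longrightarrow>
   star_op cs A $$ (i, j) = (if cs then cnj (A $$ (j, i)) else A $$ (j, i))"
  by (auto simp: star_op_def ctrans_def)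

lemma star_op_star_op [simp]: "star_op cs (star_op cs A) = A"
  by (rule eq_matI) auto

lemma star_op_mult_mat:
  assumes "A \<in> carrier_mat a b" "B \<in> carrier_mat b c"
  shows "star_op cs (A * B) = star_op cs B * star_op cs A"
  using assms
  by (simp add: star_op_def ctrans_def semiring_hom.mat_hom_mult[OF semiring_hom_cnj assms]
      transpose_mult[of _ a b _ c])

lemma star_op_add_mat:
  assumes "A \<in> carrier_mat a b" "B \<in> carrier_mat a b"
  shows "star_op cs (A + B) = star_op cs A + star_op cs B"
  using assms by (intro eq_matI) auto

lemma star_op_uminus_mat: "star_op cs (- A) = - star_op cs A"
  by (intro eq_matI) auto

lemma star_op_smult_mat: "cnj e = e \<Longrightarrow> star_op cs (e \<cdot>\<^sub>m A) = e \<cdot>\<^sub>m star_op cs A"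
  by (intro eq_matI) auto

lemma star_op_four_block_mat:
  assumes "A \<in> carrier_mat nr1 nc1" "B \<in> carrier_mat nr1 nc2"
    "C \<in> carrier_mat nr2 nc1" "D \<in> carrier_mat nr2 nc2"
  shows "star_op cs (four_block_mat A B C D) =
    four_block_mat (star_op cs A) (star_op cs C) (star_op cs B) (star_op cs D)"
  using assms by (intro eq_matI) auto

lemma append_cols_carrier_mat:
  "Q1 \<in> carrier_mat n p \<Longrightarrow> Q2 \<in> carrier_mat n r \<Longrightarrow> append_cols Q1 Q2 \<in> carrier_mat n (p + r)"
  unfolding append_cols_def using four_block_carrier_mat[of Q1 n p "0\<^sub>m 0 r" 0 r] by simp

lemma star_op_append_cols:
  assumes "Q1 \<in> carrier_mat n p" "Q2 \<in> carrier_mat n r"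
  shows "star_op cs (append_cols Q1 Q2) = star_op cs Q1 @\<^sub>r star_op cs Q2"
  using assms unfolding append_cols_def append_rows_def
  by (subst star_op_four_block_mat[of _ n p _ r _ 0]) (auto intro!: eq_matI)

lemma append_cols_mult_append_rows:
  assumes "Q1 \<in> carrier_mat n p" "Q2 \<in> carrier_mat n r" "A \<in> carrier_mat p m" "B \<in> carrier_mat r m"
  shows "append_cols Q1 Q2 * (A @\<^sub>r B) = Q1 * A + Q2 * B"
  unfolding append_cols_def append_rows_def using assms
  by (subst mult_four_block_mat[of Q1 n p Q2 r _ 0 _ A m _ 0]) (auto intro!: eq_matI)

lemma append_rows_mult:
  assumes "P1 \<in> carrier_mat p n" "P2 \<in> carrier_mat r n" "Y \<in> carrier_mat n m"
  shows "(P1 @\<^sub>r P2) * Y = (P1 * Y) @\<^sub>r (P2 * Y)"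
proof -
  have Y: "four_block_mat Y (0\<^sub>m n 0) (0\<^sub>m 0 m) (0\<^sub>m 0 0) = Y"
    using assms(3) by (intro eq_matI) auto
  have "(P1 @\<^sub>r P2) * four_block_mat Y (0\<^sub>m n 0) (0\<^sub>m 0 m) (0\<^sub>m 0 0) = (P1 * Y) @\<^sub>r (P2 * Y)"
    unfolding append_rows_def using assms
    by (subst mult_four_block_mat[of P1 p n _ 0 P2 r _ Y m _ 0]) (auto intro!: eq_matI)
  then show ?thesis
    unfolding Y .
qed

lemma four_block_mat_mult_append_rows_zero:
  assumes "A \<in> carrier_mat p p" "B \<in> carrier_mat p r" "C \<in> carrier_mat r p" "D \<in> carrier_mat r r"
    "R \<in> carrier_mat p m"
  shows "four_block_mat A B C D * (R @\<^sub>r 0\<^sub>m r m) = (A * R) @\<^sub>r (C * R)"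
  unfolding append_rows_def using assms
  by (subst mult_four_block_mat[of A p p B r C r D R m _ 0]) (auto intro!: eq_matI)

lemma minv_inverse_mat:
  assumes A: "A \<in> carrier_mat n n" and det: "det A \<noteq> 0"
  shows "minv A \<in> carrier_mat n n \<and> A * minv A = 1\<^sub>m n \<and> minv A * A = 1\<^sub>m n"
proof -
  obtain B where B: "B \<in> carrier_mat n n" "B * A = 1\<^sub>m n" "A * B = 1\<^sub>m n"
    using det_non_zero_imp_unit[OF A det, of undefined] unfolding Units_def ring_mat_def by auto
  have "C = B" if C: "C \<in> carrier_mat n n" "A * C = 1\<^sub>m n" "C * A = 1\<^sub>m n" for C
  proof -
    have "C = C * (A * B)" using B C by simp
    also have "\<dots> = (C * A) * B" by (rule assoc_mult_mat[symmetric, OF C(1) A B(1)])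
    also have "\<dots> = B" using B by (simp only: C(3) left_mult_one_mat)
    finally show "C = B" .
  qed
  then have "\<exists>!B. B \<in> carrier_mat n n \<and> A * B = 1\<^sub>m n \<and> B * A = 1\<^sub>m n"
    using B by blast
  moreover have "dim_row A = n" using A by simp
  ultimately show ?thesis
    unfolding minv_def by (simp only:) (rule theI')
qed

lemma ctrans_mult_vec_cscalar_prod:
  assumes A: "A \<in> carrier_mat a b" and w: "w \<in> carrier_vec a" and v: "v \<in> carrier_vec b"
  shows "(ctrans A *\<^sub>v w) \<bullet>c v = w \<bullet>c (A *\<^sub>v v)"
proof -
  have conj: "conjugate u = map_vec cnj u" for u :: "complex vec"
    by (intro eq_vecI) auto
  have "(ctrans A *\<^sub>v w) \<bullet>c v = w \<bullet> (map_mat cnj A *\<^sub>v conjugate v)"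
    unfolding ctrans_def using A w v by (intro transpose_vec_mult_scalar) auto
  also have "\<dots> = w \<bullet>c (A *\<^sub>v v)"
    unfolding conj using semiring_hom.mult_mat_vec_hom[OF semiring_hom_cnj A v] by simp
  finally show ?thesis .
qed

lemma det_ctrans_mult_add_one_nonzero:
  assumes A: "A \<in> carrier_mat m p" and B: "B \<in> carrier_mat k p"
  shows "det (ctrans A * A + ctrans B * B + 1\<^sub>m p) \<noteq> 0"
proof
  let ?N = "ctrans A * A + ctrans B * B + 1\<^sub>m p"
  have AA: "ctrans A * A \<in> carrier_mat p p" and BB: "ctrans B * B \<in> carrier_mat p p"
    using A B by (meson ctrans_carrier_mat mult_carrier_mat)+
  then have N: "?N \<in> carrier_mat p p" by simp
  assume "det ?N = 0"
  then obtain v where v: "v \<in> carrier_vec p" "v \<noteq> 0\<^sub>v p" "?N *\<^sub>v v = 0\<^sub>v p"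
    using det_0_iff_vec_prod_zero[OF N] by auto
  have Nv: "?N *\<^sub>v v = ctrans A *\<^sub>v (A *\<^sub>v v) + ctrans B *\<^sub>v (B *\<^sub>v v) + v"
    using v(1)
    by (simp add: add_mult_distrib_mat_vec[OF add_carrier_mat[OF BB] one_carrier_mat]
        add_mult_distrib_mat_vec[OF AA BB] assoc_mult_mat_vec[OF ctrans_carrier_mat[OF A] A]
        assoc_mult_mat_vec[OF ctrans_carrier_mat[OF B] B])
  have "0 = (?N *\<^sub>v v) \<bullet>c v" using v by simp
  also have "\<dots> = (ctrans A *\<^sub>v (A *\<^sub>v v)) \<bullet>c v + (ctrans B *\<^sub>v (B *\<^sub>v v)) \<bullet>c v + v \<bullet>c v"
  proof -
    have "ctrans A *\<^sub>v (A *\<^sub>v v) \<in> carrier_vec p" "ctrans B *\<^sub>v (B *\<^sub>v v) \<in> carrier_vec p"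
      using A B v(1) by (meson ctrans_carrier_mat mult_mat_vec_carrier)+
    then show ?thesis
      unfolding Nv using v(1) by (simp add: add_scalar_prod_distrib[of _ p])
  qed
  also have "\<dots> = (A *\<^sub>v v) \<bullet>c (A *\<^sub>v v) + (B *\<^sub>v v) \<bullet>c (B *\<^sub>v v) + v \<bullet>c v"
    using A B v(1) by (simp add: ctrans_mult_vec_cscalar_prod)
  finally have "(A *\<^sub>v v) \<bullet>c (A *\<^sub>v v) + (B *\<^sub>v v) \<bullet>c (B *\<^sub>v v) + v \<bullet>c v = 0" ..
  moreover have "(A *\<^sub>v v) \<bullet>c (A *\<^sub>v v) \<ge> 0" "(B *\<^sub>v v) \<bullet>c (B *\<^sub>v v) \<ge> 0" "v \<bullet>c v \<ge> 0"
    by auto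
  ultimately have "v \<bullet>c v \<le> 0"
    by (metis add_increasing order_refl)
  with \<open>v \<bullet>c v \<ge> 0\<close> have "v \<bullet>c v = 0" by order
  then have "v = 0\<^sub>v p" using v(1) by simp
  with v(2) show False ..
qed

definition structured_perturbation ::
    "bool \<Rightarrow> complex \<Rightarrow> complex mat \<Rightarrow> complex mat \<Rightarrow> complex mat \<Rightarrow> complex mat \<Rightarrow> complex mat
      \<Rightarrow> complex mat"
  where "structured_perturbation cs e Q1 Q2 X B D =
    append_cols Q1 Q2 * four_block_mat (- (star_op cs Q1 * X * Q1)) (e \<cdot>\<^sub>m star_op cs B) B D
      * star_op cs (append_cols Q1 Q2)"

lemma structured_perturbation_carrier_mat:
  assumes "Q1 \<in> carrier_mat n p" "Q2 \<in> carrier_mat n r" "X \<in> carrier_mat n n"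
    "B \<in> carrier_mat r p" "D \<in> carrier_mat r r"
  shows "structured_perturbation cs e Q1 Q2 X B D \<in> carrier_mat n n"
  unfolding structured_perturbation_def using assms append_cols_carrier_mat[OF assms(1,2)]
  by (intro mult_carrier_mat[of _ n "p + r"] four_block_carrier_mat) auto

lemma star_op_congruence:
  assumes e: "cnj e = e" and Q: "Q \<in> carrier_mat n m" and F: "F \<in> carrier_mat m m"
    and F_sym: "star_op cs F = e \<cdot>\<^sub>m F"
  shows "star_op cs (Q * F * star_op cs Q) = e \<cdot>\<^sub>m (Q * F * star_op cs Q)"
proof -
  have "star_op cs (Q * F * star_op cs Q) = Q * (star_op cs F * star_op cs Q)"
    using Q F by (simp add: star_op_mult_mat[of _ n m _ n] star_op_mult_mat[of _ n m _ m])
  also have "\<dots> = Q * (e \<cdot>\<^sub>m (F * star_op cs Q))"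
    unfolding F_sym using Q F by (simp add: mult_smult_assoc_mat[of _ m m _ n])
  also have "\<dots> = e \<cdot>\<^sub>m (Q * F * star_op cs Q)"
    using Q F by (simp add: mult_smult_distrib[of _ n m _ n] assoc_mult_mat[OF Q F star_op_carrier_mat[OF Q]])
  finally show ?thesis .
qed

lemma star_op_eq_smult_swap:
  assumes "e \<in> {1, -1}" and "A = e \<cdot>\<^sub>m star_op cs A"
  shows "star_op cs A = e \<cdot>\<^sub>m A"
proof -
  have "star_op cs A = star_op cs (e \<cdot>\<^sub>m star_op cs A)" using assms(2) by (rule arg_cong)
  then show ?thesis using assms(1) by (auto simp: star_op_smult_mat)
qed

lemma star_op_structured_block:
  assumes e: "e \<in> {1, -1}" and A: "A \<in> carrier_mat p p" and B: "B \<in> carrier_mat r p"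
    and D: "D \<in> carrier_mat r r"
    and A_sym: "star_op cs A = e \<cdot>\<^sub>m A" and D_sym: "star_op cs D = e \<cdot>\<^sub>m D"
  shows "star_op cs (four_block_mat A (e \<cdot>\<^sub>m star_op cs B) B D)
    = e \<cdot>\<^sub>m four_block_mat A (e \<cdot>\<^sub>m star_op cs B) B D"
proof -
  have e_real: "cnj e = e" using e by auto
  have "e \<cdot>\<^sub>m (e \<cdot>\<^sub>m star_op cs B) = star_op cs B"
    using e B by (intro eq_matI) auto
  then show ?thesis
    using e_real A B D A_sym D_sym
    by (simp add: star_op_four_block_mat[of _ p p _ r _ r] smult_four_block_mat[of _ p p _ r _ r]
        star_op_smult_mat)
qed

lemma star_op_structured_perturbation:
  assumes e: "e \<in> {1, -1}" and Q1: "Q1 \<in> carrier_mat n p" and Q2: "Q2 \<in> carrier_mat n r"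
    and X: "X \<in> carrier_mat n n" and X_sym: "star_op cs X = e \<cdot>\<^sub>m X"
    and B: "B \<in> carrier_mat r p" and D: "D \<in> carrier_mat r r" and D_sym: "D = e \<cdot>\<^sub>m star_op cs D"
  shows "star_op cs (X + structured_perturbation cs e Q1 Q2 X B D)
    = e \<cdot>\<^sub>m (X + structured_perturbation cs e Q1 Q2 X B D)"
proof -
  let ?A = "- (star_op cs Q1 * X * Q1)"
  have e_real: "cnj e = e" using e by auto
  have "star_op cs (star_op cs Q1 * X * Q1) = e \<cdot>\<^sub>m (star_op cs Q1 * X * Q1)"
    using star_op_congruence[OF e_real star_op_carrier_mat[OF Q1, of cs] X X_sym] by simp
  then have "star_op cs ?A = e \<cdot>\<^sub>m ?A"
    by (auto simp: star_op_uminus_mat)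
  then have "star_op cs (four_block_mat ?A (e \<cdot>\<^sub>m star_op cs B) B D)
      = e \<cdot>\<^sub>m four_block_mat ?A (e \<cdot>\<^sub>m star_op cs B) B D"
    using Q1 X by (intro star_op_structured_block[OF e _ B D _ star_op_eq_smult_swap[OF e D_sym]]) auto
  then have "star_op cs (structured_perturbation cs e Q1 Q2 X B D)
      = e \<cdot>\<^sub>m structured_perturbation cs e Q1 Q2 X B D"
    unfolding structured_perturbation_def using Q1 Q2 X B D append_cols_carrier_mat[OF Q1 Q2]
    by (intro star_op_congruence[OF e_real, of _ n "p + r"] four_block_carrier_mat) auto
  then show ?thesis
    using X_sym structured_perturbation_carrier_mat[OF Q1 Q2 X B D]
    by (simp add: star_op_add_mat[OF X] add_smult_distrib_left_mat[OF X])
qed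

lemma in_Qn_add_structured_perturbation:
  assumes QMDK: "in_Qn n cs e1 e2 M D K" and e: "e1 \<in> {1, -1}" "e2 \<in> {1, -1}"
    and Q1: "Q1 \<in> carrier_mat n p" and Q2: "Q2 \<in> carrier_mat n r"
    and B: "BM \<in> carrier_mat r p" "BD \<in> carrier_mat r p" "BK \<in> carrier_mat r p"
    and C: "CM \<in> carrier_mat r r" "CD \<in> carrier_mat r r" "CK \<in> carrier_mat r r"
    and C_sym: "CM = e1 \<cdot>\<^sub>m star_op cs CM" "CD = e2 \<cdot>\<^sub>m star_op cs CD" "CK = e1 \<cdot>\<^sub>m star_op cs CK"
  shows "in_Qn n cs e1 e2 (M + structured_perturbation cs e1 Q1 Q2 M BM CM)
    (D + structured_perturbation cs e2 Q1 Q2 D BD CD) (K + structured_perturbation cs e1 Q1 Q2 K BK CK)"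
  using QMDK unfolding in_Qn_def
  using star_op_structured_perturbation[OF e(1) Q1 Q2 _ _ B(1) C(1) C_sym(1), of M]
    star_op_structured_perturbation[OF e(2) Q1 Q2 _ _ B(2) C(2) C_sym(2), of D]
    star_op_structured_perturbation[OF e(1) Q1 Q2 _ _ B(3) C(3) C_sym(3), of K]
    structured_perturbation_carrier_mat[OF Q1 Q2 _ B(1) C(1), of M]
    structured_perturbation_carrier_mat[OF Q1 Q2 _ B(2) C(2), of D]
    structured_perturbation_carrier_mat[OF Q1 Q2 _ B(3) C(3), of K]
  by auto

lemma unitary_expansion:
  assumes Q1: "Q1 \<in> carrier_mat n p" and Q2: "Q2 \<in> carrier_mat n r"
    and unitary: "append_cols Q1 Q2 * star_op cs (append_cols Q1 Q2) = 1\<^sub>m n"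
    and Y: "Y \<in> carrier_mat n m"
  shows "Y = Q1 * (star_op cs Q1 * Y) + Q2 * (star_op cs Q2 * Y)"
proof -
  have Q: "append_cols Q1 Q2 \<in> carrier_mat n (p + r)"
    using Q1 Q2 by (rule append_cols_carrier_mat)
  have "Y = append_cols Q1 Q2 * (star_op cs (append_cols Q1 Q2) * Y)"
    using Q Y unitary by (simp flip: assoc_mult_mat[of _ n "p + r" _ n Y m])
  also have "\<dots> = Q1 * (star_op cs Q1 * Y) + Q2 * (star_op cs Q2 * Y)"
    using append_cols_mult_append_rows[OF Q1 Q2 mult_carrier_mat[OF star_op_carrier_mat[OF Q1] Y]
        mult_carrier_mat[OF star_op_carrier_mat[OF Q2] Y]]
    by (simp add: star_op_append_cols[OF Q1 Q2] append_rows_mult[OF star_op_carrier_mat[OF Q1]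
        star_op_carrier_mat[OF Q2] Y])
  finally show ?thesis .
qed

lemma add_structured_perturbation_mult_QR:
  assumes Q1: "Q1 \<in> carrier_mat n p" and Q2: "Q2 \<in> carrier_mat n r" and npr: "p + r = n"
    and unitary: "star_op cs (append_cols Q1 Q2) * append_cols Q1 Q2 = 1\<^sub>m n"
      "append_cols Q1 Q2 * star_op cs (append_cols Q1 Q2) = 1\<^sub>m n"
    and X: "X \<in> carrier_mat n n" and R: "R \<in> carrier_mat p p"
    and B: "B \<in> carrier_mat r p" and D: "D \<in> carrier_mat r r"
    and Xc: "Xc = append_cols Q1 Q2 * (R @\<^sub>r 0\<^sub>m r p)"
  shows "(X + structured_perturbation cs e Q1 Q2 X B D) * Xc = Q2 * (star_op cs Q2 * X * Xc + B * R)"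
proof -
  let ?Q = "append_cols Q1 Q2" and ?P1 = "star_op cs Q1" and ?P2 = "star_op cs Q2"
  let ?A = "- (?P1 * X * Q1)" and ?F = "four_block_mat (- (?P1 * X * Q1)) (e \<cdot>\<^sub>m star_op cs B) B D"
  have Q: "?Q \<in> carrier_mat n n" using append_cols_carrier_mat[OF Q1 Q2] npr by simp
  have P1: "?P1 \<in> carrier_mat p n" and P2: "?P2 \<in> carrier_mat r n"
    using Q1 Q2 by simp_all
  have A: "?A \<in> carrier_mat p p"
    using mult_carrier_mat[OF mult_carrier_mat[OF P1 X] Q1] by simp
  have F: "?F \<in> carrier_mat n n"
    using four_block_carrier_mat[OF A D] B npr by simp
  have Y: "R @\<^sub>r 0\<^sub>m r p \<in> carrier_mat n p" using R npr by auto
  have Xc_Q1: "Xc = Q1 * R"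
    unfolding Xc using Q1 Q2 R by (simp add: append_cols_mult_append_rows[of _ n p _ r _ p])
  have Xc_carrier: "Xc \<in> carrier_mat n p" using Xc_Q1 Q1 R by simp
  have QXc: "star_op cs ?Q * Xc = R @\<^sub>r 0\<^sub>m r p"
    unfolding Xc using Q Y unitary(1) by (simp flip: assoc_mult_mat[of _ n n _ n _ p])
  have "structured_perturbation cs e Q1 Q2 X B D * Xc = ?Q * ?F * (star_op cs ?Q * Xc)"
    unfolding structured_perturbation_def
    using assoc_mult_mat[OF mult_carrier_mat[OF Q F] star_op_carrier_mat[OF Q] Xc_carrier] .
  also have "\<dots> = ?Q * (?F * (R @\<^sub>r 0\<^sub>m r p))"
    unfolding QXc using Q F Y by simp
  also have "\<dots> = Q1 * (?A * R) + Q2 * (B * R)"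
    by (simp only: four_block_mat_mult_append_rows_zero[OF A smult_carrier_mat[OF star_op_carrier_mat[OF B]]
          B D R]
        append_cols_mult_append_rows[OF Q1 Q2 mult_carrier_mat[OF A R] mult_carrier_mat[OF B R]])
  also have "Q1 * (?A * R) = - (Q1 * (?P1 * X * Xc))"
  proof -
    have "dim_col (?P1 * X * Q1) = dim_row R" "dim_col Q1 = dim_row (?P1 * X * Xc)"
      using P1 Q1 R by auto
    then show ?thesis
      unfolding Xc_Q1 by (simp only: uminus_mult_left_mat uminus_mult_right_mat
          assoc_mult_mat[OF mult_carrier_mat[OF P1 X] Q1 R])
  qed
  finally have perturbation: "structured_perturbation cs e Q1 Q2 X B D * Xc
      = - (Q1 * (?P1 * X * Xc)) + Q2 * (B * R)" .
  have expansion: "X * Xc = Q1 * (?P1 * X * Xc) + Q2 * (?P2 * X * Xc)"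
    unfolding assoc_mult_mat[OF P1 X Xc_carrier] assoc_mult_mat[OF P2 X Xc_carrier]
    by (rule unitary_expansion[OF Q1 Q2 unitary(2) mult_carrier_mat[OF X Xc_carrier]])
  have Y2: "?P2 * X * Xc \<in> carrier_mat r p" and BR: "B * R \<in> carrier_mat r p"
    using mult_carrier_mat[OF mult_carrier_mat[OF P2 X] Xc_carrier] mult_carrier_mat[OF B R] .
  have "(X + structured_perturbation cs e Q1 Q2 X B D) * Xc
      = X * Xc + structured_perturbation cs e Q1 Q2 X B D * Xc"
    by (rule add_mult_distrib_mat[OF X structured_perturbation_carrier_mat[OF Q1 Q2 X B D] Xc_carrier])
  also have "\<dots> = Q2 * (?P2 * X * Xc) + Q2 * (B * R)"
  proof -
    have cancel: "a + b + (- a + c) = b + c"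
      if "a \<in> carrier_mat n p" "b \<in> carrier_mat n p" "c \<in> carrier_mat n p" for a b c :: "complex mat"
      using that by (intro eq_matI) auto
    show ?thesis
      unfolding expansion perturbation
      by (rule cancel[OF mult_carrier_mat[OF Q1 mult_carrier_mat[OF mult_carrier_mat[OF P1 X] Xc_carrier]]
          mult_carrier_mat[OF Q2 Y2] mult_carrier_mat[OF Q2 BR]])
  qed
  also have "\<dots> = Q2 * (?P2 * X * Xc + B * R)"
    by (rule mult_add_distrib_mat[symmetric, OF Q2 Y2 BR])
  finally show ?thesis .
qed


lemma minv_ctrans_mult_add_one:
  assumes "A \<in> carrier_mat m p" and "B \<in> carrier_mat k p"
  shows "minv (ctrans A * A + ctrans B * B + 1\<^sub>m p) \<in> carrier_mat p p"
    and "minv (ctrans A * A + ctrans B * B + 1\<^sub>m p) * (ctrans A * A + ctrans B * B + 1\<^sub>m p) = 1\<^sub>m p"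
proof -
  have "ctrans A * A + ctrans B * B + 1\<^sub>m p \<in> carrier_mat p p"
    by (rule add_carrier_mat[OF one_carrier_mat])
  with minv_inverse_mat[OF this det_ctrans_mult_add_one_nonzero[OF assms]]
  show "minv (ctrans A * A + ctrans B * B + 1\<^sub>m p) \<in> carrier_mat p p"
    and "minv (ctrans A * A + ctrans B * B + 1\<^sub>m p) * (ctrans A * A + ctrans B * B + 1\<^sub>m p) = 1\<^sub>m p"
    by auto
qed

lemma add_structured_perturbation_minv_mult_QR:
  assumes Q1: "Q1 \<in> carrier_mat n p" and Q2: "Q2 \<in> carrier_mat n r" and npr: "p + r = n"
    and unitary: "star_op cs (append_cols Q1 Q2) * append_cols Q1 Q2 = 1\<^sub>m n"
      "append_cols Q1 Q2 * star_op cs (append_cols Q1 Q2) = 1\<^sub>m n"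
    and X: "X \<in> carrier_mat n n" and R: "R \<in> carrier_mat p p" and R_nonsing: "det R \<noteq> 0"
    and T: "T \<in> carrier_mat r p" and D: "D \<in> carrier_mat r r"
    and Xc: "Xc = append_cols Q1 Q2 * (R @\<^sub>r 0\<^sub>m r p)"
  shows "(X + structured_perturbation cs e Q1 Q2 X (T * minv R) D) * Xc = Q2 * (star_op cs Q2 * X * Xc + T)"
proof -
  have R_inv: "minv R \<in> carrier_mat p p" "minv R * R = 1\<^sub>m p"
    using minv_inverse_mat[OF R R_nonsing] by auto
  have "T * minv R * R = T"
    using T by (simp add: assoc_mult_mat[OF T R_inv(1) R] R_inv(2))
  then show ?thesis
    using add_structured_perturbation_mult_QR[OF Q1 Q2 npr unitary X R _ D Xc, of "T * minv R"] T R_inv(1)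
    by simp
qed

lemma invariant_pair_mult_left:
  assumes inv: "invariant_pair M D K X L" and P: "P \<in> carrier_mat r n"
    and M: "M \<in> carrier_mat n n" and D: "D \<in> carrier_mat n n" and K: "K \<in> carrier_mat n n"
    and X: "X \<in> carrier_mat n p" and L: "L \<in> carrier_mat p p"
  shows "P * M * X * (L * L) + P * D * X * L + P * K * X = 0\<^sub>m r p"
proof -
  have LL: "L * L \<in> carrier_mat p p" using L by simp
  have MX: "M * X * (L * L) \<in> carrier_mat n p" and DX: "D * X * L \<in> carrier_mat n p"
    and KX: "K * X \<in> carrier_mat n p"
    using M D K X L by auto
  have "P * M * X * (L * L) + P * D * X * L + P * K * X
      = P * (M * X * (L * L)) + P * (D * X * L) + P * (K * X)"
    by (simp only: assoc_mult_mat[OF mult_carrier_mat[OF P M] X LL]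
        assoc_mult_mat[OF P M mult_carrier_mat[OF X LL]]
        assoc_mult_mat[OF M X LL] assoc_mult_mat[OF mult_carrier_mat[OF P D] X L]
        assoc_mult_mat[OF P D mult_carrier_mat[OF X L]] assoc_mult_mat[OF D X L] assoc_mult_mat[OF P K X])
  also have "\<dots> = P * (M * X * (L * L) + D * X * L + K * X)"
    by (simp only: mult_add_distrib_mat[OF P add_carrier_mat[OF DX] KX] mult_add_distrib_mat[OF P MX DX])
  also have "\<dots> = 0\<^sub>m r p"
    using inv M L P unfolding invariant_pair_def by (simp add: right_mult_zero_mat)
  finally show ?thesis .
qed

lemma invariant_pair_factorI:
  assumes M: "M \<in> carrier_mat n n" and Y: "Y \<in> carrier_mat n r" and L: "L \<in> carrier_mat p p"
    and G: "G1 \<in> carrier_mat r p" "G2 \<in> carrier_mat r p" "G3 \<in> carrier_mat r p"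
    and factor: "M * X = Y * G1" "D * X = Y * G2" "K * X = Y * G3"
    and residual: "G1 * (L * L) + G2 * L + G3 = 0\<^sub>m r p"
  shows "invariant_pair M D K X L"
proof -
  have LL: "L * L \<in> carrier_mat p p" using L by simp
  have G1L: "G1 * (L * L) \<in> carrier_mat r p" and G2L: "G2 * L \<in> carrier_mat r p"
    using G L by auto
  have "M * X * (L * L) + D * X * L + K * X = Y * (G1 * (L * L)) + Y * (G2 * L) + Y * G3"
    unfolding factor by (simp only: assoc_mult_mat[OF Y G(1) LL] assoc_mult_mat[OF Y G(2) L])
  also have "\<dots> = Y * (G1 * (L * L) + G2 * L + G3)"
    by (simp only: mult_add_distrib_mat[OF Y add_carrier_mat[OF G2L] G(3)] mult_add_distrib_mat[OF Y G1L G2L])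
  finally show ?thesis
    unfolding invariant_pair_def residual using M Y L by (simp add: right_mult_zero_mat)
qed

lemma corrected_residual_eq_zero:
  fixes a b c Z1 Z2 Z3 W S L2 L C2 Lc :: "complex mat"
  assumes blocks: "a \<in> carrier_mat r p" "b \<in> carrier_mat r p" "c \<in> carrier_mat r p"
      "Z1 \<in> carrier_mat r p" "Z2 \<in> carrier_mat r p" "Z3 \<in> carrier_mat r p"
    and squares: "L2 \<in> carrier_mat p p" "L \<in> carrier_mat p p" "C2 \<in> carrier_mat p p" "Lc \<in> carrier_mat p p"
    and S: "S \<in> carrier_mat p p" and S_inv: "S * (ctrans L2 * L2 + ctrans L * L + 1\<^sub>m p) = 1\<^sub>m p"
    and W: "W = a * (L2 - C2) + b * (L - Lc) + Z1 * L2 + Z2 * L + Z3"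
    and old: "a * C2 + b * Lc + c = 0\<^sub>m r p"
  shows "(a + (Z1 - W * S * ctrans L2)) * L2 + (b + (Z2 - W * S * ctrans L)) * L + (c + (Z3 - W * S))
    = 0\<^sub>m r p"
proof -
  let ?N = "ctrans L2 * L2 + ctrans L * L + 1\<^sub>m p" and ?WS = "W * S"
  have N2: "ctrans L2 * L2 \<in> carrier_mat p p" and N1: "ctrans L * L \<in> carrier_mat p p"
    using squares by (meson ctrans_carrier_mat mult_carrier_mat)+
  then have N: "?N \<in> carrier_mat p p" by simp
  have W_carrier: "W \<in> carrier_mat r p" unfolding W using blocks squares by auto
  have WS: "?WS \<in> carrier_mat r p" using W_carrier S by simp
  have "?WS * (ctrans L2 * L2) + ?WS * (ctrans L * L) + ?WS = ?WS * ?N"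
    by (simp only: mult_add_distrib_mat[OF WS add_carrier_mat[OF N1] one_carrier_mat]
        mult_add_distrib_mat[OF WS N2 N1] right_mult_one_mat[OF WS])
  also have "\<dots> = W"
    by (simp only: assoc_mult_mat[OF W_carrier S N] S_inv right_mult_one_mat[OF W_carrier])
  finally have WSN: "?WS * (ctrans L2 * L2) + ?WS * (ctrans L * L) + ?WS = W" .
  have W_expanded: "W = a * L2 - a * C2 + (b * L - b * Lc) + Z1 * L2 + Z2 * L + Z3"
    unfolding W mult_minus_distrib_mat[OF blocks(1) squares(1,3)]
      mult_minus_distrib_mat[OF blocks(2) squares(2,4)] ..
  have WL2: "?WS * ctrans L2 \<in> carrier_mat r p" and WL: "?WS * ctrans L \<in> carrier_mat r p"
    using mult_carrier_mat[OF WS ctrans_carrier_mat[OF squares(1)]]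
      mult_carrier_mat[OF WS ctrans_carrier_mat[OF squares(2)]] .
  have "(a + (Z1 - ?WS * ctrans L2)) * L2 = a * L2 + (Z1 * L2 - ?WS * (ctrans L2 * L2))"
    by (simp only: add_mult_distrib_mat[OF blocks(1) minus_carrier_mat[OF WL2] squares(1)]
        minus_mult_distrib_mat[OF blocks(4) WL2 squares(1)]
        assoc_mult_mat[OF WS ctrans_carrier_mat[OF squares(1)] squares(1)])
  moreover have "(b + (Z2 - ?WS * ctrans L)) * L = b * L + (Z2 * L - ?WS * (ctrans L * L))"
    by (simp only: add_mult_distrib_mat[OF blocks(2) minus_carrier_mat[OF WL] squares(2)]
        minus_mult_distrib_mat[OF blocks(5) WL squares(2)]
        assoc_mult_mat[OF WS ctrans_carrier_mat[OF squares(2)] squares(2)])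
  moreover
  have linear: "u1 + (z1 - x1) + (u2 + (z2 - x2)) + (c + (z3 - x3)) = 0\<^sub>m r p"
    if h: "x1 + x2 + x3 = w" "w = u1 - v1 + (u2 - v2) + z1 + z2 + z3" "v1 + v2 + c = 0\<^sub>m r p"
      and dims: "u1 \<in> carrier_mat r p" "u2 \<in> carrier_mat r p" "v1 \<in> carrier_mat r p"
        "v2 \<in> carrier_mat r p" "z1 \<in> carrier_mat r p" "z2 \<in> carrier_mat r p" "z3 \<in> carrier_mat r p"
        "x1 \<in> carrier_mat r p" "x2 \<in> carrier_mat r p" "x3 \<in> carrier_mat r p" "w \<in> carrier_mat r p"
    for u1 u2 v1 v2 z1 z2 z3 x1 x2 x3 w :: "complex mat"
  proof (rule eq_matI)
    fix i j assume "i < dim_row (0\<^sub>m r p :: complex mat)" "j < dim_col (0\<^sub>m r p :: complex mat)"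
    then have ij: "i < r" "j < p" by simp_all
    let ?e = "\<lambda>A :: complex mat. A $$ (i, j)"
    have "?e x1 + ?e x2 + ?e x3 = ?e w"
      using arg_cong[OF h(1), of ?e] ij dims by (simp add: add.assoc)
    moreover have "?e w = ?e u1 - ?e v1 + (?e u2 - ?e v2) + ?e z1 + ?e z2 + ?e z3"
      using arg_cong[OF h(2), of ?e] ij dims by simp
    moreover have "?e v1 + ?e v2 + ?e c = 0"
      using arg_cong[OF h(3), of ?e] ij dims blocks(3) by (simp add: add.assoc)
    moreover have "?e (u1 + (z1 - x1) + (u2 + (z2 - x2)) + (c + (z3 - x3)))
        = (?e u1 - ?e v1 + (?e u2 - ?e v2) + ?e z1 + ?e z2 + ?e z3) - (?e x1 + ?e x2 + ?e x3)
          + (?e v1 + ?e v2 + ?e c)"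
      using ij dims blocks(3) by (simp add: algebra_simps)
    ultimately show "?e (u1 + (z1 - x1) + (u2 + (z2 - x2)) + (c + (z3 - x3))) = ?e (0\<^sub>m r p)"
      using ij by (simp only:) simp
  qed (use dims in auto)
  have "a * L2 + (Z1 * L2 - ?WS * (ctrans L2 * L2)) + (b * L + (Z2 * L - ?WS * (ctrans L * L)))
      + (c + (Z3 - ?WS)) = 0\<^sub>m r p"
    by (rule linear[OF WSN W_expanded old mult_carrier_mat[OF blocks(1) squares(1)]
        mult_carrier_mat[OF blocks(2) squares(2)] mult_carrier_mat[OF blocks(1) squares(3)]
        mult_carrier_mat[OF blocks(2) squares(4)] mult_carrier_mat[OF blocks(4) squares(1)]
        mult_carrier_mat[OF blocks(5) squares(2)] blocks(6) mult_carrier_mat[OF WS N2]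
        mult_carrier_mat[OF WS N1] WS W_carrier])
  ultimately show ?thesis by (simp only:)
qed

lemma corrected_blocks_carrier_mat:
  assumes P2: "P2 \<in> carrier_mat r n" and M: "M \<in> carrier_mat n n" and D: "D \<in> carrier_mat n n"
    and Xc: "Xc \<in> carrier_mat n p" and Lc: "Lc \<in> carrier_mat p p" and La: "La \<in> carrier_mat p p"
    and Z: "Z1 \<in> carrier_mat r p" "Z2 \<in> carrier_mat r p" "Z3 \<in> carrier_mat r p"
    and S: "S \<in> carrier_mat p p"
    and W: "W = P2 * M * Xc * (La * La - Lc * Lc) + P2 * D * Xc * (La - Lc) + Z1 * (La * La) + Z2 * La + Z3"
  shows "Z1 - W * S * ctrans (La * La) \<in> carrier_mat r p" "Z2 - W * S * ctrans La \<in> carrier_mat r p"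
    "Z3 - W * S \<in> carrier_mat r p"
proof -
  have "P2 * M * Xc \<in> carrier_mat r p" "P2 * D * Xc \<in> carrier_mat r p"
    using mult_carrier_mat[OF mult_carrier_mat[OF P2 M] Xc] mult_carrier_mat[OF mult_carrier_mat[OF P2 D] Xc] .
  then have "W \<in> carrier_mat r p"
    unfolding W using Lc La Z by (simp add: minus_carrier_mat)
  then have WS: "W * S \<in> carrier_mat r p" using S by simp
  show "Z1 - W * S * ctrans (La * La) \<in> carrier_mat r p" "Z2 - W * S * ctrans La \<in> carrier_mat r p"
    "Z3 - W * S \<in> carrier_mat r p"
    using minus_carrier_mat[OF mult_carrier_mat[OF WS ctrans_carrier_mat[OF mult_carrier_mat[OF La La]]]]
      minus_carrier_mat[OF mult_carrier_mat[OF WS ctrans_carrier_mat[OF La]]] minus_carrier_mat[OF WS] .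
qed

lemma invariant_pair_add_structured_perturbation:
  assumes Q1: "Q1 \<in> carrier_mat n p" and Q2: "Q2 \<in> carrier_mat n r" and npr: "p + r = n"
    and unitary: "star_op cs (append_cols Q1 Q2) * append_cols Q1 Q2 = 1\<^sub>m n"
      "append_cols Q1 Q2 * star_op cs (append_cols Q1 Q2) = 1\<^sub>m n"
    and M: "M \<in> carrier_mat n n" and D: "D \<in> carrier_mat n n" and K: "K \<in> carrier_mat n n"
    and R: "R \<in> carrier_mat p p" and R_nonsing: "det R \<noteq> 0"
    and Xc: "Xc = append_cols Q1 Q2 * (R @\<^sub>r 0\<^sub>m r p)"
    and Lc: "Lc \<in> carrier_mat p p" and La: "La \<in> carrier_mat p p"
    and Z: "Z1 \<in> carrier_mat r p" "Z2 \<in> carrier_mat r p" "Z3 \<in> carrier_mat r p"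
    and C: "M22 \<in> carrier_mat r r" "D22 \<in> carrier_mat r r" "K22 \<in> carrier_mat r r"
    and inv: "invariant_pair M D K Xc Lc"
    and S: "S \<in> carrier_mat p p" "S * (ctrans (La * La) * (La * La) + ctrans La * La + 1\<^sub>m p) = 1\<^sub>m p"
    and W: "W = star_op cs Q2 * M * Xc * (La * La - Lc * Lc) + star_op cs Q2 * D * Xc * (La - Lc)
      + Z1 * (La * La) + Z2 * La + Z3"
  shows "invariant_pair
    (M + structured_perturbation cs e1 Q1 Q2 M ((Z1 - W * S * ctrans (La * La)) * minv R) M22)
    (D + structured_perturbation cs e2 Q1 Q2 D ((Z2 - W * S * ctrans La) * minv R) D22)
    (K + structured_perturbation cs e1 Q1 Q2 K ((Z3 - W * S) * minv R) K22) Xc La"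
proof -
  let ?P2 = "star_op cs Q2"
  have P2: "?P2 \<in> carrier_mat r n" using Q2 by simp
  have Xc_carrier: "Xc \<in> carrier_mat n p"
    unfolding Xc
    by (rule mult_carrier_mat[OF append_cols_carrier_mat[OF Q1 Q2] carrier_append_rows[OF R zero_carrier_mat]])
  have G: "?P2 * M * Xc \<in> carrier_mat r p" "?P2 * D * Xc \<in> carrier_mat r p" "?P2 * K * Xc \<in> carrier_mat r p"
    using mult_carrier_mat[OF mult_carrier_mat[OF P2 M] Xc_carrier]
      mult_carrier_mat[OF mult_carrier_mat[OF P2 D] Xc_carrier]
      mult_carrier_mat[OF mult_carrier_mat[OF P2 K] Xc_carrier] .
  note T = corrected_blocks_carrier_mat[OF P2 M D Xc_carrier Lc La Z S(1) W]
  have "?P2 * M * Xc * (Lc * Lc) + ?P2 * D * Xc * Lc + ?P2 * K * Xc = 0\<^sub>m r p"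
    by (rule invariant_pair_mult_left[OF inv P2 M D K Xc_carrier Lc])
  then have residual: "(?P2 * M * Xc + (Z1 - W * S * ctrans (La * La))) * (La * La)
      + (?P2 * D * Xc + (Z2 - W * S * ctrans La)) * La + (?P2 * K * Xc + (Z3 - W * S)) = 0\<^sub>m r p"
    by (rule corrected_residual_eq_zero[OF G Z mult_carrier_mat[OF La La] La mult_carrier_mat[OF Lc Lc] Lc S W])
  have R_inv: "minv R \<in> carrier_mat p p" using minv_inverse_mat[OF R R_nonsing] by simp
  have "M + structured_perturbation cs e1 Q1 Q2 M ((Z1 - W * S * ctrans (La * La)) * minv R) M22
      \<in> carrier_mat n n"
    using M structured_perturbation_carrier_mat[OF Q1 Q2 M mult_carrier_mat[OF T(1) R_inv] C(1)] by simp
  then show ?thesis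
    by (rule invariant_pair_factorI[OF _ Q2 La add_carrier_mat[OF T(1)] add_carrier_mat[OF T(2)]
          add_carrier_mat[OF T(3)] add_structured_perturbation_minv_mult_QR[OF Q1 Q2 npr unitary M R R_nonsing T(1) C(1) Xc]
          add_structured_perturbation_minv_mult_QR[OF Q1 Q2 npr unitary D R R_nonsing T(2) C(2) Xc]
          add_structured_perturbation_minv_mult_QR[OF Q1 Q2 npr unitary K R R_nonsing T(3) C(3) Xc] residual])
qed

theorem theorem3p5:
  fixes n p :: nat and isReal cs :: bool and e1 e2 :: complex
    and M D K Xc Lc La Q1 Q2 R Z1 Z2 Z3 M22 D22 K22 :: "complex mat"
  defines "Q \<equiv> append_cols Q1 Q2"
  defines "S \<equiv> minv (ctrans (La * La) * (La * La) + ctrans La * La + 1\<^sub>m p)"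
  defines "W \<equiv> star_op cs Q2 * M * Xc * (La * La - Lc * Lc) + star_op cs Q2 * D * Xc * (La - Lc)
               + Z1 * (La * La) + Z2 * La + Z3"
  defines "M12 \<equiv> (Z1 - W * S * ctrans (La * La)) * minv R"
  defines "D12 \<equiv> (Z2 - W * S * ctrans La) * minv R"
  defines "K12 \<equiv> (Z3 - W * S) * minv R"
  defines "\<Delta>M \<equiv> Q * four_block_mat (- (star_op cs Q1 * M * Q1)) (e1 \<cdot>\<^sub>m star_op cs M12) M12 M22 * star_op cs Q"
  defines "\<Delta>D \<equiv> Q * four_block_mat (- (star_op cs Q1 * D * Q1)) (e2 \<cdot>\<^sub>m star_op cs D12) D12 D22 * star_op cs Q"
  defines "\<Delta>K \<equiv> Q * four_block_mat (- (star_op cs Q1 * K * Q1)) (e1 \<cdot>\<^sub>m star_op cs K12) K12 K22 * star_op cs Q"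
  assumes e1: "e1 \<in> {1, -1}" and e2: "e2 \<in> {1, -1}"
    and pn: "p \<le> n"
    and QMDK: "in_Qn n cs e1 e2 M D K"
    and dims: "Xc \<in> carrier_mat n p" "Lc \<in> carrier_mat p p" "La \<in> carrier_mat p p"
      "Q1 \<in> carrier_mat n p" "Q2 \<in> carrier_mat n (n - p)" "R \<in> carrier_mat p p"
      "Z1 \<in> carrier_mat (n - p) p" "Z2 \<in> carrier_mat (n - p) p" "Z3 \<in> carrier_mat (n - p) p"
      "M22 \<in> carrier_mat (n - p) (n - p)" "D22 \<in> carrier_mat (n - p) (n - p)"
      "K22 \<in> carrier_mat (n - p) (n - p)"
    and realK: "isReal \<longrightarrow> (real_mat M \<and> real_mat D \<and> real_mat K \<and> real_mat Xc \<and> real_mat Lc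
        \<and> real_mat La \<and> real_mat Q1 \<and> real_mat Q2 \<and> real_mat R \<and> real_mat Z1 \<and> real_mat Z2
        \<and> real_mat Z3 \<and> real_mat M22 \<and> real_mat D22 \<and> real_mat K22)"
    and inv: "invariant_pair M D K Xc Lc"
    and rk: "vec_space.rank n Xc = p"
    and XQR: "Xc = Q * (R @\<^sub>r 0\<^sub>m (n - p) p)"
    and Rnonsing: "det R \<noteq> 0"
    and Qunit: "star_op cs Q * Q = 1\<^sub>m n" "Q * star_op cs Q = 1\<^sub>m n"
    and M22s: "M22 = e1 \<cdot>\<^sub>m star_op cs M22"
    and D22s: "D22 = e2 \<cdot>\<^sub>m star_op cs D22"
    and K22s: "K22 = e1 \<cdot>\<^sub>m star_op cs K22"
  shows "invariant_pair (M + \<Delta>M) (D + \<Delta>D) (K + \<Delta>K) Xc La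
         \<and> in_Qn n cs e1 e2 (M + \<Delta>M) (D + \<Delta>D) (K + \<Delta>K)"
proof -
  have npr: "p + (n - p) = n" using pn by simp
  have unitary: "star_op cs (append_cols Q1 Q2) * append_cols Q1 Q2 = 1\<^sub>m n"
      "append_cols Q1 Q2 * star_op cs (append_cols Q1 Q2) = 1\<^sub>m n"
    using Qunit unfolding Q_def .
  have M: "M \<in> carrier_mat n n" and D: "D \<in> carrier_mat n n" and K: "K \<in> carrier_mat n n"
    using QMDK unfolding in_Qn_def by auto
  have S: "S \<in> carrier_mat p p" "S * (ctrans (La * La) * (La * La) + ctrans La * La + 1\<^sub>m p) = 1\<^sub>m p"
    unfolding S_def using minv_ctrans_mult_add_one[OF mult_carrier_mat[OF dims(3,3)] dims(3)] by auto
  note W = meta_eq_to_obj_eq[OF W_def]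
  have "M12 \<in> carrier_mat (n - p) p" "D12 \<in> carrier_mat (n - p) p" "K12 \<in> carrier_mat (n - p) p"
    unfolding M12_def D12_def K12_def using minv_inverse_mat[OF dims(6) Rnonsing]
      corrected_blocks_carrier_mat[OF star_op_carrier_mat[OF dims(5)] M D dims(1,2,3,7-9) S(1) W] by auto
  moreover have "\<Delta>M = structured_perturbation cs e1 Q1 Q2 M M12 M22"
      "\<Delta>D = structured_perturbation cs e2 Q1 Q2 D D12 D22"
      "\<Delta>K = structured_perturbation cs e1 Q1 Q2 K K12 K22"
    unfolding \<Delta>M_def \<Delta>D_def \<Delta>K_def Q_def structured_perturbation_def by simp_all
  moreover have "invariant_pair
      (M + structured_perturbation cs e1 Q1 Q2 M M12 M22) (D + structured_perturbation cs e2 Q1 Q2 D D12 D22)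
      (K + structured_perturbation cs e1 Q1 Q2 K K12 K22) Xc La"
    unfolding M12_def D12_def K12_def
    by (rule invariant_pair_add_structured_perturbation[OF dims(4,5) npr unitary M D K dims(6) Rnonsing
          XQR[unfolded Q_def] dims(2,3,7-12) inv S W])
  ultimately show ?thesis
    using in_Qn_add_structured_perturbation[OF QMDK e1 e2 dims(4,5) _ _ _ dims(10-12) M22s D22s K22s]
    by simp
qed

end
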